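(* Let $f\in L^1_2(\mathbb{R}^3)$ be measurable with $0\le f\le1$ and $S(f)>0$. Then there exists $\epsilon_0\in(0,\tfrac14]$, depending only on $S(f)$ and $\|f\|_{1,2}$, such that the set $E_2:=\{v:\epsilon_0\le f(v)\le1-\epsilon_0\}$ satisfies $|E_2|\ge\frac{S(f)}{2\ln2}$. Furthermore there is $R>0$, depending only on $\epsilon_0$, $S(f)$ and $\|f\|_{1,2}$, such that $|E_2\cap\{|v|\le R\}|>\frac12|E_2|$.
   Context: $\|f\|_{1,s}=\int_{\mathbb{R}^3}|f(v)|(1+|v|^2)^{s/2}dv$, $L^1_2$ the corresponding space. Entropy: $S(f)=-\int_{\mathbb{R}^3}\big(f\ln f+(1-f)\ln(1-f)\big)dv$ with $0\ln0=0$. $|A|$ denotes Lebesgue measure. *)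

theory Defs
  imports "HOL-Analysis.Analysis"
begin

definition xlnx :: "real \<Rightarrow> real" where
  "xlnx x = (if x = 0 then 0 else x * ln x)"

definition weighted_L1_norm :: "real \<Rightarrow> (real^3 \<Rightarrow> real) \<Rightarrow> real" where
  "weighted_L1_norm s f = (\<integral>v. \<bar>f v\<bar> * (1 + (norm v)\<^sup>2) powr (s / 2) \<partial>lborel)"

definition in_L1_weighted :: "real \<Rightarrow> (real^3 \<Rightarrow> real) \<Rightarrow> bool" where
  "in_L1_weighted s f \<longleftrightarrow> f \<in> borel_measurable lborel \<and>
     integrable lborel (\<lambda>v. \<bar>f v\<bar> * (1 + (norm v)\<^sup>2) powr (s / 2))"

definition entropy :: "(real^3 \<Rightarrow> real) \<Rightarrow> real" where
  "entropy f = - (\<integral>v. xlnx (f v) + xlnx (1 - f v) \<partial>lborel)"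

end

theory Submission
  imports Defs "HOL-Probability.Distributions" "HOL-Real_Asymp.Real_Asymp"
begin

(* Write h(x) = -(x ln x + (1 - x) ln (1 - x)), so that S(f) is the integral of h(f).
   On E2 one has h(f) <= ln 2. Off E2, either f > 1 - eps, where h(f) <= 6 sqrt(eps) f,
   or f < eps, where h(f) <= 3 sqrt(eps) on a ball of radius rho, while outside it the
   Fenchel-Young inequality -x ln x <= x w + exp(-w - 1), taken with w = |v|_1, bounds h(f)
   by (n + 1)/rho f(v)(1 + |v|^2) plus the integrable tail exp(-rho/2) exp(-|v|_1/2).
   Integrating gives S(f) <= ln 2 |E2| + error, and choosing first rho and then eps in terms
   of S(f) and the weighted norm makes the error at most S(f)/2. Since f(v)(1 + |v|^2) is
   at least eps(1 + R^2) on E2 outside the ball of radius R, Markov's inequality shows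
   that this part of E2 is small once R is large. *)

definition binary_entropy :: "real \<Rightarrow> real" where
  "binary_entropy x = - (xlnx x + xlnx (1 - x))"

lemma binary_entropy_one_minus: "binary_entropy (1 - x) = binary_entropy x"
  by (simp add: binary_entropy_def add.commute)

lemma neg_xlnx_le:
  assumes "0 \<le> x"
  shows "- xlnx x \<le> x * w + exp (- w - 1)"
proof (cases "x = 0")
  case False
  with assms have x: "0 < x" by simp
  have "ln (exp (- w - 1) / x) \<le> exp (- w - 1) / x - 1"
    using x by (intro ln_le_minus_one) simp
  then have "- ln x - w \<le> exp (- w - 1) / x"
    using x by (simp add: ln_div)
  then have "x * (- ln x - w) \<le> exp (- w - 1)"
    using x by (simp add: field_simps)
  then show ?thesis
    by (simp add: xlnx_def algebra_simps)
qed (simp add: xlnx_def)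

lemma neg_xlnx_one_minus_le: "x \<le> 1 \<Longrightarrow> - xlnx (1 - x) \<le> x"
  using neg_xlnx_le[of "1 - x" "- 1"] by simp

lemma neg_xlnx_le_sqrt:
  assumes "0 \<le> x"
  shows "- xlnx x \<le> 2 * sqrt x"
proof -
  have "xlnx x = 2 * sqrt x * xlnx (sqrt x)"
    using assms by (cases "x = 0") (simp_all add: xlnx_def ln_sqrt)
  moreover have "- xlnx (sqrt x) \<le> 1 - sqrt x"
    using neg_xlnx_le[of "sqrt x" "- 1"] assms by simp
  ultimately show ?thesis
    using assms mult_left_mono[of "- xlnx (sqrt x)" 1 "2 * sqrt x"] by simp
qed

lemma binary_entropy_le_ln2:
  assumes "0 \<le> x" "x \<le> 1"
  shows "binary_entropy x \<le> ln 2"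
  using neg_xlnx_le[of x "ln 2 - 1"] neg_xlnx_le[of "1 - x" "ln 2 - 1"] assms
  by (simp add: binary_entropy_def exp_minus algebra_simps)

lemma binary_entropy_le_sqrt:
  assumes "0 \<le> x" "x \<le> 1"
  shows "binary_entropy x \<le> 3 * sqrt x"
proof -
  have "x \<le> sqrt x"
    using assms by (intro real_le_rsqrt) (simp add: power2_eq_square mult_left_le_one_le)
  then show ?thesis
    using neg_xlnx_le_sqrt[of x] neg_xlnx_one_minus_le[of x] assms
    by (simp add: binary_entropy_def)
qed

lemma binary_entropy_le_linear:
  assumes "0 \<le> x" "x \<le> 1"
  shows "binary_entropy x \<le> x * w + exp (- w - 1) + x"
  using neg_xlnx_le[of x w] neg_xlnx_one_minus_le[of x] assms
  by (simp add: binary_entropy_def)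

lemma binary_entropy_near_one_le:
  assumes "1 - \<epsilon> < x" "x \<le> 1" "\<epsilon> \<le> 1/2"
  shows "binary_entropy x \<le> 6 * sqrt \<epsilon> * x"
proof -
  have "binary_entropy x = binary_entropy (1 - x)"
    by (simp add: binary_entropy_one_minus)
  also have "\<dots> \<le> 3 * sqrt (1 - x)"
    using assms by (intro binary_entropy_le_sqrt) auto
  also have "\<dots> \<le> 3 * sqrt \<epsilon>"
    using assms by simp
  also have "\<dots> \<le> 6 * sqrt \<epsilon> * x"
    using assms mult_left_mono[of "1/2" x "6 * sqrt \<epsilon>"] by simp
  finally show ?thesis .
qed

lemma binary_entropy_far_le:
  fixes v :: "'a::euclidean_space"
  assumes "0 \<le> x" "x \<le> 1" "1 \<le> \<rho>" "\<rho> < norm v"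
  shows "binary_entropy x \<le> (DIM('a) + 1) / \<rho> * (x * (1 + (norm v)\<^sup>2))
           + exp (- \<rho> / 2) * exp (- (\<Sum>b\<in>Basis. \<bar>v \<bullet> b\<bar>) / 2)"
proof -
  define L where "L = (\<Sum>b\<in>Basis. \<bar>v \<bullet> b\<bar>)"
  have "norm v \<le> L"
    unfolding L_def by (rule norm_le_l1)
  have "L \<le> DIM('a) * norm v"
    unfolding L_def using sum_bounded_above[of Basis "\<lambda>b. \<bar>v \<bullet> b\<bar>" "norm v"]
    by (simp add: Basis_le_norm)
  have "\<rho> * norm v \<le> 1 + (norm v)\<^sup>2"
    using assms mult_right_mono[of \<rho> "norm v" "norm v"] by (simp add: power2_eq_square)
  then have "norm v \<le> (1 + (norm v)\<^sup>2) / \<rho>"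
    using assms by (simp add: field_simps)
  have "x * L + x \<le> x * ((DIM('a) + 1) * norm v)"
    using \<open>L \<le> DIM('a) * norm v\<close> assms mult_left_mono[of "L + 1" "(DIM('a) + 1) * norm v" x]
    by (simp add: algebra_simps)
  also have "\<dots> \<le> x * ((DIM('a) + 1) * ((1 + (norm v)\<^sup>2) / \<rho>))"
    using \<open>norm v \<le> (1 + (norm v)\<^sup>2) / \<rho>\<close> assms by (intro mult_left_mono) auto
  also have "\<dots> = (DIM('a) + 1) / \<rho> * (x * (1 + (norm v)\<^sup>2))"
    by simp
  finally have linear_part: "x * L + x \<le> (DIM('a) + 1) / \<rho> * (x * (1 + (norm v)\<^sup>2))" .
  have "exp (- L - 1) \<le> exp (- \<rho> / 2 + - L / 2)"
    using \<open>norm v \<le> L\<close> assms by simp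
  also have "\<dots> = exp (- \<rho> / 2) * exp (- L / 2)"
    by (rule exp_add)
  finally have exp_part: "exp (- L - 1) \<le> exp (- \<rho> / 2) * exp (- L / 2)" .
  show ?thesis
    using binary_entropy_le_linear[of x L] assms linear_part exp_part
    unfolding L_def by linarith
qed

lemma binary_entropy_dominated:
  fixes v :: "'a::euclidean_space"
  assumes "0 \<le> x" "x \<le> 1" "0 \<le> \<epsilon>" "\<epsilon> \<le> 1/2" "1 \<le> \<rho>"
  shows "binary_entropy x \<le> ln 2 * of_bool (\<epsilon> \<le> x \<and> x \<le> 1 - \<epsilon>)
           + 3 * sqrt \<epsilon> * indicator (cball 0 \<rho>) v
           + (6 * sqrt \<epsilon> + (DIM('a) + 1) / \<rho>) * (x * (1 + (norm v)\<^sup>2))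
           + exp (- \<rho> / 2) * exp (- (\<Sum>b\<in>Basis. \<bar>v \<bullet> b\<bar>) / 2)"
    (is "_ \<le> ?mid + ?ball + (6 * sqrt \<epsilon> + ?c) * ?W + ?tail")
proof -
  have "x \<le> ?W"
    using assms by (simp add: algebra_simps)
  then have near_one: "6 * sqrt \<epsilon> * x \<le> 6 * sqrt \<epsilon> * ?W"
    using assms by (simp add: mult_left_mono)
  have "0 \<le> ?mid" "0 \<le> ?ball" "0 \<le> 6 * sqrt \<epsilon> * ?W" "0 \<le> ?c * ?W" "0 \<le> ?tail"
    using assms by simp_all
  moreover have "(6 * sqrt \<epsilon> + ?c) * ?W = 6 * sqrt \<epsilon> * ?W + ?c * ?W"
    by (rule distrib_right)
  moreover consider "\<epsilon> \<le> x \<and> x \<le> 1 - \<epsilon>" | "1 - \<epsilon> < x" | "x < \<epsilon>" "norm v \<le> \<rho>"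
    | "x < \<epsilon>" "\<rho> < norm v"
    by linarith
  then have "binary_entropy x \<le> ?mid \<or> binary_entropy x \<le> 6 * sqrt \<epsilon> * ?W \<or>
      binary_entropy x \<le> ?ball \<or> binary_entropy x \<le> ?c * ?W + ?tail"
  proof cases
    case 1
    then show ?thesis
      using binary_entropy_le_ln2[of x] assms by simp
  next
    case 2
    then show ?thesis
      using binary_entropy_near_one_le[of \<epsilon> x] assms near_one by linarith
  next
    case 3
    then have "3 * sqrt x \<le> ?ball"
      by simp
    then show ?thesis
      using binary_entropy_le_sqrt[of x] assms by linarith
  next
    case 4
    then show ?thesis
      using binary_entropy_far_le[of x \<rho> v] assms by simp
  qed
  ultimately show ?thesis
    by linarith
qed

lemma nn_integral_exp_neg_abs_finite:
  assumes "0 < c"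
  shows "(\<integral>\<^sup>+x. ennreal (exp (- \<bar>x\<bar> / c)) \<partial>lborel) < \<infinity>"
proof -
  let ?g = "exponential_density (1 / c)"
  have g_nonneg: "0 \<le> ?g x" for x
    using assms by (simp add: exponential_density_nonneg)
  have g_integral: "(\<integral>\<^sup>+x. ?g x \<partial>lborel) = 1"
    using prob_space.emeasure_space_1[OF prob_space_exponential_density[of "1 / c"]] assms
    by (simp add: emeasure_density)
  have g_reflected_integral: "(\<integral>\<^sup>+x. ?g (- x) \<partial>lborel) = 1"
    using nn_integral_real_affine[of "\<lambda>x. ennreal (?g x)" "- 1" 0] g_integral by simp
  have "exp (- \<bar>x\<bar> / c) \<le> c * (?g x + ?g (- x))" for x
    using assms g_nonneg[of x] g_nonneg[of "- x"]
    by (cases "0 \<le> x") (simp_all add: exponential_density_def)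
  then have "(\<integral>\<^sup>+x. ennreal (exp (- \<bar>x\<bar> / c)) \<partial>lborel)
      \<le> (\<integral>\<^sup>+x. ennreal (c * (?g x + ?g (- x))) \<partial>lborel)"
    by (intro nn_integral_mono ennreal_leI)
  also have "\<dots> = ennreal c * ((\<integral>\<^sup>+x. ?g x \<partial>lborel) + (\<integral>\<^sup>+x. ?g (- x) \<partial>lborel))"
    using assms g_nonneg by (simp add: ennreal_mult nn_integral_cmult nn_integral_add)
  also have "\<dots> < \<infinity>"
    unfolding g_integral g_reflected_integral by (simp add: ennreal_mult_less_top)
  finally show ?thesis .
qed

lemma integrable_exp_neg_l1_norm:
  assumes "0 < c"
  shows "integrable lborel (\<lambda>v::'a::euclidean_space. exp (- (\<Sum>b\<in>Basis. \<bar>v \<bullet> b\<bar>) / c))"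
proof -
  have "exp (- (\<Sum>b\<in>Basis. \<bar>v \<bullet> b\<bar>) / c) = exp (\<Sum>b\<in>Basis. - \<bar>v \<bullet> b\<bar> / c)" for v :: 'a
    by (simp add: sum_negf sum_divide_distrib)
  then have product: "ennreal (exp (- (\<Sum>b\<in>Basis. \<bar>v \<bullet> b\<bar>) / c))
      = (\<Prod>b\<in>Basis. ennreal (exp (- \<bar>v \<bullet> b\<bar> / c)))" for v :: 'a
    by (simp add: exp_sum prod_ennreal)
  have "(\<integral>\<^sup>+v. ennreal (exp (- (\<Sum>b\<in>Basis. \<bar>v \<bullet> b\<bar>) / c)) \<partial>(lborel :: 'a measure))
      = (\<Prod>b\<in>(Basis :: 'a set). \<integral>\<^sup>+x. ennreal (exp (- \<bar>x\<bar> / c)) \<partial>lborel)"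
    unfolding product by (rule nn_integral_lborel_prod) auto
  also have "\<dots> < \<infinity>"
    using nn_integral_exp_neg_abs_finite[OF assms]
    by (simp add: less_top[symmetric] power_eq_top_ennreal)
  finally show ?thesis
    by (simp add: integrable_iff_bounded)
qed

lemma emeasure_le_integral_div:
  fixes u :: "'a \<Rightarrow> real"
  assumes u: "integrable M u" and "\<And>x. x \<in> space M \<Longrightarrow> 0 \<le> u x"
    and "A \<in> sets M" "0 < c" "\<And>x. x \<in> A \<Longrightarrow> c \<le> u x"
  shows "emeasure M A \<le> ennreal ((\<integral>x. u x \<partial>M) / c)"
proof -
  have [measurable]: "u \<in> borel_measurable M"
    using u by (rule borel_measurable_integrable)
  have "A \<subseteq> {x \<in> space M. c \<le> u x}"
    using assms sets.sets_into_space by blast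
  then have "emeasure M A \<le> emeasure M {x \<in> space M. c \<le> u x}"
    by (intro emeasure_mono) measurable
  also have "\<dots> \<le> ennreal ((1 / c) * (\<integral>x. u x \<partial>M))"
    using assms by (intro integral_Markov_inequality) auto
  finally show ?thesis
    by simp
qed

lemma measure_le_integral_div:
  fixes u :: "'a \<Rightarrow> real"
  assumes "integrable M u" and "\<And>x. x \<in> space M \<Longrightarrow> 0 \<le> u x"
    and "A \<in> sets M" "0 < c" "\<And>x. x \<in> A \<Longrightarrow> c \<le> u x"
  shows "measure M A \<le> (\<integral>x. u x \<partial>M) / c"
  unfolding measure_def using assms
  by (intro enn2real_leI emeasure_le_integral_div integral_nonneg_AE AE_I2) auto

lemma emeasure_Int_gt_half:
  assumes "emeasure M A < \<infinity>" "A \<in> sets M" "B \<in> sets M"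
    and "measure M (A - B) < measure M A / 2"
  shows "emeasure M A / 2 < emeasure M (A \<inter> B)"
proof -
  have "emeasure M (A \<inter> B) \<le> emeasure M A"
    using assms by (intro emeasure_mono) auto
  then have finite_Int: "emeasure M (A \<inter> B) < \<infinity>"
    using assms(1) by order
  have "measure M (A - B) = measure M A - measure M (A \<inter> B)"
    using assms measure_Diff[of M A "A \<inter> B"] by (simp add: Diff_Int)
  then have "measure M A / 2 < measure M (A \<inter> B)"
    using assms(4) by linarith
  moreover have "emeasure M A / 2 = ennreal (measure M A / 2)"
    using assms(1) divide_ennreal[of "measure M A" 2] by (simp add: emeasure_eq_ennreal_measure)
  ultimately show ?thesis
    using finite_Int by (simp add: emeasure_eq_ennreal_measure ennreal_less_iff)
qed

context
  fixes f :: "'a::euclidean_space \<Rightarrow> real"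
  assumes f_measurable [measurable]: "f \<in> borel_measurable lborel"
    and f_nonneg: "\<And>v. 0 \<le> f v" and f_le_one: "\<And>v. f v \<le> 1"
    and weighted_integrable: "integrable lborel (\<lambda>v. f v * (1 + (norm v)\<^sup>2))"
begin

lemma weighted_nonneg: "0 \<le> f v * (1 + (norm v)\<^sup>2)"
  using f_nonneg by simp

lemma le_weighted: "f v \<le> f v * (1 + (norm v)\<^sup>2)"
  using f_nonneg by (simp add: algebra_simps)

lemma emeasure_middle_set_finite:
  assumes "0 < \<epsilon>"
  shows "emeasure lborel {v. \<epsilon> \<le> f v \<and> f v \<le> 1 - \<epsilon>} < \<infinity>"
proof -
  have "\<epsilon> \<le> f v * (1 + (norm v)\<^sup>2)" if "\<epsilon> \<le> f v" for v
    using that le_weighted[of v] by simp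
  then have "emeasure lborel {v. \<epsilon> \<le> f v \<and> f v \<le> 1 - \<epsilon>}
      \<le> ennreal ((\<integral>v. f v * (1 + (norm v)\<^sup>2) \<partial>lborel) / \<epsilon>)"
    using weighted_integrable weighted_nonneg assms by (intro emeasure_le_integral_div) auto
  also have "\<dots> < \<infinity>"
    by simp
  finally show ?thesis .
qed

lemma integral_binary_entropy_le:
  assumes "0 < \<epsilon>" "\<epsilon> \<le> 1/2" "1 \<le> \<rho>"
  defines "E \<equiv> {v. \<epsilon> \<le> f v \<and> f v \<le> 1 - \<epsilon>}"
  shows "(\<integral>v. binary_entropy (f v) \<partial>lborel)
    \<le> ln 2 * measure lborel E + 3 * sqrt \<epsilon> * measure lborel (cball (0::'a) \<rho>)
      + (6 * sqrt \<epsilon> + (DIM('a) + 1) / \<rho>) * (\<integral>v. f v * (1 + (norm v)\<^sup>2) \<partial>lborel)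
      + exp (- \<rho> / 2) * (\<integral>v. exp (- (\<Sum>b\<in>Basis. \<bar>v \<bullet> b\<bar>) / 2) \<partial>(lborel :: 'a measure))"
    (is "_ \<le> ?bound")
proof -
  have E_sets [measurable]: "E \<in> sets lborel"
    unfolding E_def by measurable
  have "emeasure lborel E < \<infinity>"
    unfolding E_def using assms(1) by (rule emeasure_middle_set_finite)
  define dominant where "dominant v =
      ln 2 * indicator E v + 3 * sqrt \<epsilon> * indicator (cball 0 \<rho>) v
      + (6 * sqrt \<epsilon> + (DIM('a) + 1) / \<rho>) * (f v * (1 + (norm v)\<^sup>2))
      + exp (- \<rho> / 2) * exp (- (\<Sum>b\<in>Basis. \<bar>v \<bullet> b\<bar>) / 2)" for v
  have dominant_integral: "has_bochner_integral lborel dominant ?bound"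
    unfolding dominant_def
  proof (intro has_bochner_integral_add has_bochner_integral_mult_right)
    show "has_bochner_integral lborel (indicator E) (measure lborel E)"
      using E_sets \<open>emeasure lborel E < \<infinity>\<close> by (intro has_bochner_integral_real_indicator) auto
    show "has_bochner_integral lborel (indicator (cball (0::'a) \<rho>)) (measure lborel (cball (0::'a) \<rho>))"
      by (intro has_bochner_integral_real_indicator emeasure_bounded_finite) auto
    show "has_bochner_integral lborel (\<lambda>v. f v * (1 + (norm v)\<^sup>2))
        (\<integral>v. f v * (1 + (norm v)\<^sup>2) \<partial>lborel)"
      using weighted_integrable by (rule has_bochner_integral_integrable)
    show "has_bochner_integral lborel (\<lambda>v::'a. exp (- (\<Sum>b\<in>Basis. \<bar>v \<bullet> b\<bar>) / 2))
        (\<integral>v. exp (- (\<Sum>b\<in>Basis. \<bar>v \<bullet> b\<bar>) / 2) \<partial>(lborel :: 'a measure))"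
      by (intro has_bochner_integral_integrable integrable_exp_neg_l1_norm) simp
  qed
  \<comment> \<open>No integrability of \<open>binary_entropy \<circ> f\<close> is needed: otherwise its integral is \<open>0\<close>.\<close>
  have "(\<integral>v. binary_entropy (f v) \<partial>lborel) \<le> (\<integral>v. dominant v \<partial>lborel)"
  proof (rule integral_mono')
    show "integrable lborel dominant"
      using dominant_integral by (rule integrable.intros)
    show "binary_entropy (f v) \<le> dominant v" for v
      using binary_entropy_dominated[of "f v" \<epsilon> \<rho> v] f_nonneg f_le_one assms
      by (simp add: dominant_def E_def indicator_def)
    show "0 \<le> dominant v" for v
      using assms weighted_nonneg by (simp add: dominant_def)
  qed
  also have "\<dots> = ?bound"
    using dominant_integral by (rule has_bochner_integral_integral_eq)
  finally show ?thesis .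
qed

lemma middle_set_bounds:
  assumes "0 < \<epsilon>" "\<epsilon> \<le> 1/2" "1 \<le> \<rho>" "0 \<le> R"
    and entropy: "(\<integral>v. binary_entropy (f v) \<partial>lborel) = S"
    and weighted_le: "(\<integral>v. f v * (1 + (norm v)\<^sup>2) \<partial>lborel) \<le> K"
    and error_small: "3 * sqrt \<epsilon> * measure lborel (cball (0::'a) \<rho>)
      + (6 * sqrt \<epsilon> + (DIM('a) + 1) / \<rho>) * K
      + exp (- \<rho> / 2) * (\<integral>v. exp (- (\<Sum>b\<in>Basis. \<bar>v \<bullet> b\<bar>) / 2) \<partial>(lborel :: 'a measure))
      \<le> S / 2"
    and tail_small: "K / (\<epsilon> * (1 + R\<^sup>2)) < S / 4"
  defines "E \<equiv> {v. \<epsilon> \<le> f v \<and> f v \<le> 1 - \<epsilon>}"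
  shows "ennreal (S / (2 * ln 2)) \<le> emeasure lborel E"
    and "emeasure lborel E / 2 < emeasure lborel (E \<inter> {v. norm v \<le> R})"
proof -
  have E_sets [measurable]: "E \<in> sets lborel"
    unfolding E_def by measurable
  have E_finite: "emeasure lborel E < \<infinity>"
    unfolding E_def using assms(1) by (rule emeasure_middle_set_finite)
  have "(6 * sqrt \<epsilon> + (DIM('a) + 1) / \<rho>) * (\<integral>v. f v * (1 + (norm v)\<^sup>2) \<partial>lborel)
      \<le> (6 * sqrt \<epsilon> + (DIM('a) + 1) / \<rho>) * K"
    using assms(1,3) weighted_le by (intro mult_left_mono) auto
  then have "S \<le> ln 2 * measure lborel E + S / 2"
    using integral_binary_entropy_le[OF assms(1-3)] entropy error_small
    unfolding E_def by linarith
  then have measure_E: "S / (2 * ln 2) \<le> measure lborel E"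
    by (simp add: field_simps)
  then show "ennreal (S / (2 * ln 2)) \<le> emeasure lborel E"
    using E_finite by (simp add: emeasure_eq_ennreal_measure)
  have "0 < \<epsilon> * (1 + R\<^sup>2)"
    using assms(1) by (simp add: add_pos_nonneg)
  have outside_sets: "E - {v. norm v \<le> R} \<in> sets lborel"
    by measurable
  have "\<epsilon> * (1 + R\<^sup>2) \<le> f v * (1 + (norm v)\<^sup>2)" if "v \<in> E - {v. norm v \<le> R}" for v
    using that assms f_nonneg[of v]
    by (intro mult_mono) (auto simp: E_def power_mono)
  with outside_sets have "measure lborel (E - {v. norm v \<le> R})
      \<le> (\<integral>v. f v * (1 + (norm v)\<^sup>2) \<partial>lborel) / (\<epsilon> * (1 + R\<^sup>2))"
    using weighted_integrable weighted_nonneg \<open>0 < \<epsilon> * (1 + R\<^sup>2)\<close>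
    by (intro measure_le_integral_div) auto
  also have "\<dots> \<le> K / (\<epsilon> * (1 + R\<^sup>2))"
    using weighted_le \<open>0 < \<epsilon> * (1 + R\<^sup>2)\<close> by (simp add: divide_right_mono)
  also have "\<dots> < S / 4"
    by (rule tail_small)
  also have "\<dots> \<le> measure lborel E / 2"
  proof -
    have "0 \<le> (\<integral>v. f v * (1 + (norm v)\<^sup>2) \<partial>lborel)"
      using weighted_nonneg by (simp add: integral_nonneg_AE)
    then have "0 \<le> K / (\<epsilon> * (1 + R\<^sup>2))"
      using weighted_le \<open>0 < \<epsilon> * (1 + R\<^sup>2)\<close> by simp
    then have "0 \<le> S"
      using tail_small by linarith
    then have "S / 2 \<le> S / (2 * ln 2)"
      using ln_2_less_1 by (intro divide_left_mono) auto
    then show ?thesis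
      using measure_E by linarith
  qed
  finally show "emeasure lborel E / 2 < emeasure lborel (E \<inter> {v. norm v \<le> R})"
    using E_finite E_sets by (intro emeasure_Int_gt_half) auto
qed

end

lemma exists_radius_error_lt:
  fixes a b S :: real
  assumes "0 < S"
  shows "\<exists>\<rho>\<ge>1. a / \<rho> + exp (- \<rho> / 2) * b < S"
proof -
  have "((\<lambda>\<rho>. a / \<rho> + exp (- \<rho> / 2) * b) \<longlongrightarrow> 0) at_top"
    by real_asymp
  then have "\<forall>\<^sub>F \<rho> in at_top. 1 \<le> \<rho> \<and> a / \<rho> + exp (- \<rho> / 2) * b < S"
    using assms by (intro eventually_conj eventually_ge_at_top order_tendstoD(2))
  then show ?thesis
    using eventually_happens'[OF trivial_limit_at_top_linorder] by blast
qed

lemma exists_width_error_lt: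
  fixes c S :: real
  assumes "0 < S"
  shows "\<exists>\<epsilon>>0. \<epsilon> \<le> 1/4 \<and> sqrt \<epsilon> * c < S"
proof -
  have "((\<lambda>\<epsilon>. sqrt \<epsilon> * c) \<longlongrightarrow> 0) (at_right 0)"
    by real_asymp
  then have "\<forall>\<^sub>F \<epsilon> in at_right 0. \<epsilon> \<in> {0<..<1/4} \<and> sqrt \<epsilon> * c < S"
    using assms by (intro eventually_conj eventually_at_right_real order_tendstoD(2)) auto
  then show ?thesis
    using eventually_happens'[OF trivial_limit_at_right_real] by fastforce
qed

lemma exists_radius_tail_lt:
  fixes c S :: real
  assumes "0 < S"
  shows "\<exists>R>0. c / (1 + R\<^sup>2) < S"
proof -
  have "((\<lambda>R. c / (1 + R\<^sup>2)) \<longlongrightarrow> 0) at_top"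
    by real_asymp
  then have "\<forall>\<^sub>F R in at_top. 0 < R \<and> c / (1 + R\<^sup>2) < S"
    using assms by (intro eventually_conj eventually_gt_at_top order_tendstoD(2))
  then show ?thesis
    using eventually_happens'[OF trivial_limit_at_top_linorder] by blast
qed

lemma weighted_L1_two_nonneg:
  assumes "\<And>v. 0 \<le> f v"
  shows "in_L1_weighted 2 f \<longleftrightarrow>
      f \<in> borel_measurable lborel \<and> integrable lborel (\<lambda>v. f v * (1 + (norm v)\<^sup>2))"
    and "weighted_L1_norm 2 f = (\<integral>v. f v * (1 + (norm v)\<^sup>2) \<partial>lborel)"
proof -
  have "(\<lambda>v. \<bar>f v\<bar> * (1 + (norm v)\<^sup>2) powr (2 / 2)) = (\<lambda>v. f v * (1 + (norm v)\<^sup>2))"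
    using assms by (simp add: abs_of_nonneg add_pos_nonneg)
  then show "in_L1_weighted 2 f \<longleftrightarrow>
      f \<in> borel_measurable lborel \<and> integrable lborel (\<lambda>v. f v * (1 + (norm v)\<^sup>2))"
    and "weighted_L1_norm 2 f = (\<integral>v. f v * (1 + (norm v)\<^sup>2) \<partial>lborel)"
    unfolding in_L1_weighted_def weighted_L1_norm_def by simp_all
qed

lemma entropy_eq_integral_binary_entropy:
  "entropy f = (\<integral>v. binary_entropy (f v) \<partial>lborel)"
  unfolding entropy_def binary_entropy_def by (simp only: integral_minus)

theorem lemma4p10:
  fixes S0 M :: real
  assumes "S0 > 0"
  shows "\<exists>\<epsilon>0::real. 0 < \<epsilon>0 \<and> \<epsilon>0 \<le> 1/4 \<and> (\<exists>R::real. R > 0 \<and>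
    (\<forall>f :: real^3 \<Rightarrow> real.
       in_L1_weighted 2 f \<and> (\<forall>v. 0 \<le> f v \<and> f v \<le> 1) \<and>
       entropy f = S0 \<and> weighted_L1_norm 2 f = M \<longrightarrow>
       (let E2 = {v. \<epsilon>0 \<le> f v \<and> f v \<le> 1 - \<epsilon>0} in
          emeasure lborel E2 \<ge> ennreal (S0 / (2 * ln 2)) \<and>
          emeasure lborel (E2 \<inter> {v. norm v \<le> R}) > emeasure lborel E2 / 2)))"
proof -
  \<comment> \<open>\<open>M\<close> is an arbitrary real; for negative \<open>M\<close> no \<open>f\<close> qualifies, so only \<open>\<bar>M\<bar>\<close> is used as a bound.\<close>
  define K where "K = \<bar>M\<bar>"
  define C where "C = (\<integral>v. exp (- (\<Sum>b\<in>Basis. \<bar>v \<bullet> b\<bar>) / 2) \<partial>(lborel :: (real^3) measure))"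
  obtain \<rho> where "1 \<le> \<rho>" and radius: "(DIM(real^3) + 1) * K / \<rho> + exp (- \<rho> / 2) * C < S0 / 4"
    using exists_radius_error_lt assms by (metis zero_less_divide_iff zero_less_numeral)
  obtain \<epsilon> where "0 < \<epsilon>" "\<epsilon> \<le> 1/4"
    and width: "sqrt \<epsilon> * (3 * measure lborel (cball (0::real^3) \<rho>) + 6 * K) < S0 / 4"
    using exists_width_error_lt assms by (metis zero_less_divide_iff zero_less_numeral)
  obtain R where "0 < R" and tail: "K / (\<epsilon> * (1 + R\<^sup>2)) < S0 / 4"
    using exists_radius_tail_lt assms by (metis divide_divide_eq_left zero_less_divide_iff zero_less_numeral)
  have error: "3 * sqrt \<epsilon> * measure lborel (cball (0::real^3) \<rho>)
      + (6 * sqrt \<epsilon> + (DIM(real^3) + 1) / \<rho>) * K + exp (- \<rho> / 2) * C \<le> S0 / 2"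
    using radius width by (simp add: distrib_left distrib_right)
  have "let E2 = {v. \<epsilon> \<le> f v \<and> f v \<le> 1 - \<epsilon>} in
      emeasure lborel E2 \<ge> ennreal (S0 / (2 * ln 2)) \<and>
      emeasure lborel (E2 \<inter> {v. norm v \<le> R}) > emeasure lborel E2 / 2"
    if f01: "\<forall>v. 0 \<le> f v \<and> f v \<le> 1" and "in_L1_weighted 2 f"
      and "entropy f = S0" and "weighted_L1_norm 2 f = M" for f :: "real^3 \<Rightarrow> real"
  proof -
    have f_bounds: "0 \<le> f v" "f v \<le> 1" for v
      using f01 by auto
    have f: "f \<in> borel_measurable lborel" "integrable lborel (\<lambda>v. f v * (1 + (norm v)\<^sup>2))"
      "(\<integral>v. f v * (1 + (norm v)\<^sup>2) \<partial>lborel) \<le> K" "(\<integral>v. binary_entropy (f v) \<partial>lborel) = S0"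
      using that weighted_L1_two_nonneg[OF f_bounds(1)]
      by (auto simp: K_def entropy_eq_integral_binary_entropy)
    show ?thesis
      using middle_set_bounds[OF f(1) f_bounds f(2) \<open>0 < \<epsilon>\<close> _ \<open>1 \<le> \<rho>\<close> _ f(4,3)
          error[unfolded C_def] tail] \<open>\<epsilon> \<le> 1/4\<close> \<open>0 < R\<close>
      unfolding Let_def by simp
  qed
  then show ?thesis
    using \<open>0 < \<epsilon>\<close> \<open>\<epsilon> \<le> 1/4\<close> \<open>0 < R\<close> by blast
qed

end
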